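(* There exists a constant $c>0$ such that the following holds. Consider the $K$-class stochastic block model on $n$ nodes (labels $Z_i$; given $Z$, $A_{ij}=A_{ji}$, $i<j$, independent Bernoulli$(P_{Z_iZ_j})$, $A_{ii}=0$, $P$ symmetric with entries in $[0,1]$). Let $t_{ab}:[0,1]\to\mathbb R$, $a,b\in\{1,\dots,K\}$, be twice differentiable functions with $\|t_{ab}'\|_\infty\vee\|t_{ab}''\|_\infty\le1$, and define for labellings $e$ the $K\times K$ matrix $$X_{ab}(e)=t_{ab}\Big(\frac{\widetilde O_{ab}(e)}{n^2}\Big)-t_{ab}\Big(\frac{\mathbb E(\widetilde O_{ab}(e)\mid Z)}{n^2}\Big).$$ Then for every integer $0\le m\le n$ and every $x>0$, $$\Pr\Big(\max_{e:\,\#\{i:e_i\ne Z_i\}\le m}\|X(e)-X(Z)\|_\infty>x\Big)\le6\binom nmK^{m+2}e^{-\frac{cx^2n^2}{m\|P\|_\infty/n+x}}.$$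
   Context: $O_{ab}(e)=\sum_{i,j}A_{ij}1\{e_i=a,e_j=b\}$ for $a\ne b$, $O_{aa}(e)=\sum_{i<j}A_{ij}1\{e_i=e_j=a\}$; $\widetilde O_{ab}(e)=O_{ab}(e)$ for $a\ne b$ and $\widetilde O_{aa}(e)=2O_{aa}(e)$. For a matrix $M$, $\|M\|_\infty=\max_{a,b}|M_{ab}|$; for a function, $\|\cdot\|_\infty$ is the sup norm. *)

theory Defs
  imports "HOL-Probability.Probability"
begin

text \<open>Nodes are 0..<n, classes are 0..<K. An outcome of the random graph is the
 vector of upper-triangular edge indicators w (i,j), i<j<n.\<close>

definition adj :: "(nat \<times> nat \<Rightarrow> bool) \<Rightarrow> nat \<Rightarrow> nat \<Rightarrow> real" where
  "adj w i j = (if i < j then of_bool (w (i, j)) else if j < i then of_bool (w (j, i)) else 0)"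

definition sbm_pmf :: "nat \<Rightarrow> (nat \<Rightarrow> nat \<Rightarrow> real) \<Rightarrow> (nat \<Rightarrow> nat) \<Rightarrow> (nat \<times> nat \<Rightarrow> bool) pmf" where
  "sbm_pmf n P Z = Pi_pmf {(i, j). i < j \<and> j < n} False
     (\<lambda>(i, j). bernoulli_pmf (P (Z i) (Z j)))"

definition Ocount :: "nat \<Rightarrow> (nat \<Rightarrow> nat \<Rightarrow> real) \<Rightarrow> (nat \<Rightarrow> nat) \<Rightarrow> nat \<Rightarrow> nat \<Rightarrow> real" where
  "Ocount n A e a b =
     (if a \<noteq> b then (\<Sum>i<n. \<Sum>j<n. A i j * of_bool (e i = a \<and> e j = b))
      else (\<Sum>i<n. \<Sum>j<n. if i < j then A i j * of_bool (e i = a \<and> e j = a) else 0))"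

definition Otilde :: "nat \<Rightarrow> (nat \<Rightarrow> nat \<Rightarrow> real) \<Rightarrow> (nat \<Rightarrow> nat) \<Rightarrow> nat \<Rightarrow> nat \<Rightarrow> real" where
  "Otilde n A e a b = (if a = b then 2 * Ocount n A e a b else Ocount n A e a b)"

definition Xmat :: "nat \<Rightarrow> (nat \<Rightarrow> nat \<Rightarrow> real) \<Rightarrow> (nat \<Rightarrow> nat) \<Rightarrow> (nat \<Rightarrow> nat \<Rightarrow> real \<Rightarrow> real)
    \<Rightarrow> (nat \<times> nat \<Rightarrow> bool) \<Rightarrow> (nat \<Rightarrow> nat) \<Rightarrow> nat \<Rightarrow> nat \<Rightarrow> real" where
  "Xmat n P Z t w e a b =
     t a b (Otilde n (adj w) e a b / real n ^ 2)
     - t a b (measure_pmf.expectation (sbm_pmf n P Z) (\<lambda>w'. Otilde n (adj w') e a b) / real n ^ 2)"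

definition supnorm :: "nat \<Rightarrow> (nat \<Rightarrow> nat \<Rightarrow> real) \<Rightarrow> real" where
  "supnorm K M = Max {\<bar>M a b\<bar> | a b. a < K \<and> b < K}"

end

theory Submission
  imports Defs
begin

text \<open>
  For a fixed labelling \<open>e\<close> and entry \<open>(a, b)\<close>, both \<open>Otilde_ab(e) / n\<^sup>2\<close> and its conditional mean
  are linear in the independent edge indicators. A second-order expansion of \<open>t_ab\<close> bounds
  \<open>|X_ab(e) - X_ab(Z)|\<close> by \<open>2 |D| + |\<delta>| |R|\<close>: here \<open>D\<close> is a centred sum over the at most \<open>2 m n\<close>
  pairs touching a node relabelled by \<open>e\<close>, with variance \<open>O(r / n\<^sup>2)\<close> for \<open>r = m \<parallel>P\<parallel> / n\<close>;
  \<open>\<delta>\<close> is a deterministic bias of size at most \<open>4 r\<close>; and \<open>R\<close> is the centred density of the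
  true labelling, with variance \<open>O(\<parallel>P\<parallel> / n\<^sup>2)\<close>. Bernstein's inequality gives tails of order
  \<open>exp (- c x\<^sup>2 n\<^sup>2 / (r + x))\<close> for \<open>D\<close> at level \<open>x / 4\<close> and for \<open>R\<close> at level \<open>x / (8 r)\<close>. A union bound
  over the \<open>(n choose m) K\<^sup>m\<close> ways of relabelling at most \<open>m\<close> nodes and the \<open>K\<^sup>2\<close> entries finishes
  the proof, with \<open>c = 1/2048\<close>.
\<close>

lemma exp_le_quadratic:
  fixes u :: real
  assumes "\<bar>u\<bar> \<le> 1"
  shows "exp u \<le> 1 + u + u\<^sup>2"
proof (cases "u \<ge> 0")
  case True
  then show ?thesis using assms exp_bound by auto
next
  case False
  define v where "v = - u"
  have v: "0 < v" "v \<le> 1" using False assms by (auto simp: v_def)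
  have "exp u = 1 / exp v" by (simp add: v_def exp_minus field_simps)
  also have "\<dots> \<le> 1 / (1 + v)"
    using exp_ge_add_one_self[of v] v by (intro divide_left_mono) auto
  also have "\<dots> \<le> 1 - v + v\<^sup>2"
  proof -
    have "1 \<le> (1 - v + v\<^sup>2) * (1 + v)" using v by (simp add: algebra_simps power2_eq_square)
    then show ?thesis using v by (simp add: field_simps)
  qed
  finally show ?thesis by (simp add: v_def)
qed

lemma bernoulli_centered_mgf_le:
  fixes z q :: real
  assumes "\<bar>z\<bar> \<le> 1" "0 \<le> q" "q \<le> 1"
  shows "measure_pmf.expectation (bernoulli_pmf q) (\<lambda>b. exp (z * (of_bool b - q))) \<le> exp (z\<^sup>2 * q)"
proof -
  have "\<bar>z * (1 - q)\<bar> \<le> 1" "\<bar>z * - q\<bar> \<le> 1"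
    using assms by (auto simp: abs_mult intro: mult_le_one)
  then have "exp (z * (1 - q)) * q + exp (z * - q) * (1 - q)
      \<le> (1 + z * (1 - q) + (z * (1 - q))\<^sup>2) * q + (1 + z * - q + (z * - q)\<^sup>2) * (1 - q)"
    using assms by (intro add_mono mult_right_mono exp_le_quadratic) auto
  also have "\<dots> = 1 + z\<^sup>2 * q * (1 - q)" by (simp add: algebra_simps power2_eq_square)
  also have "\<dots> \<le> 1 + z\<^sup>2 * q" using assms by (intro add_left_mono mult_left_le) auto
  also have "\<dots> \<le> exp (z\<^sup>2 * q)" by (rule exp_ge_add_one_self)
  finally show ?thesis using assms by simp
qed

lemma finite_set_Pi_pmf_bernoulli:
  assumes "finite I"
  shows "finite (set_pmf (Pi_pmf I False (\<lambda>p. bernoulli_pmf (q p))))"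
  by (rule finite_subset[OF set_Pi_pmf_subset'[OF assms]]) (use assms in \<open>auto intro: finite_PiE_dflt\<close>)

lemma Pi_bernoulli_centered_mgf_le:
  assumes I: "finite I" and q: "\<And>p. p \<in> I \<Longrightarrow> 0 \<le> q p \<and> q p \<le> 1"
    and \<alpha>: "\<And>p. p \<in> I \<Longrightarrow> \<bar>\<alpha> p\<bar> \<le> 1"
  shows "measure_pmf.expectation (Pi_pmf I False (\<lambda>p. bernoulli_pmf (q p)))
           (\<lambda>w. exp (\<Sum>p\<in>I. \<alpha> p * (of_bool (w p) - q p))) \<le> exp (\<Sum>p\<in>I. (\<alpha> p)\<^sup>2 * q p)"
proof -
  have "measure_pmf.expectation (Pi_pmf I False (\<lambda>p. bernoulli_pmf (q p)))
           (\<lambda>w. exp (\<Sum>p\<in>I. \<alpha> p * (of_bool (w p) - q p)))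
      = (\<Prod>p\<in>I. measure_pmf.expectation (bernoulli_pmf (q p)) (\<lambda>b. exp (\<alpha> p * (of_bool b - q p))))"
    unfolding exp_sum[OF I]
    by (rule expectation_prod_Pi_pmf[OF I]) (auto intro: integrable_measure_pmf_finite)
  also have "\<dots> \<le> (\<Prod>p\<in>I. exp ((\<alpha> p)\<^sup>2 * q p))"
    using q \<alpha> by (intro prod_mono conjI bernoulli_centered_mgf_le integral_nonneg) auto
  also have "\<dots> = exp (\<Sum>p\<in>I. (\<alpha> p)\<^sup>2 * q p)" by (rule exp_sum[OF I, symmetric])
  finally show ?thesis .
qed

lemma chernoff_bound_pmf:
  fixes Y :: "'a \<Rightarrow> real"
  assumes "finite (set_pmf M)" "0 < \<theta>"
  shows "measure_pmf.prob M {w. y \<le> Y w} \<le> measure_pmf.expectation M (\<lambda>w. exp (\<theta> * Y w)) / exp (\<theta> * y)"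
proof -
  have "measure_pmf.prob M {w \<in> space M. exp (\<theta> * y) \<le> exp (\<theta> * Y w)}
      \<le> measure_pmf.expectation M (\<lambda>w. exp (\<theta> * Y w)) / exp (\<theta> * y)"
    by (rule integral_Markov_inequality_measure[where A="{}"])
      (auto intro: integrable_measure_pmf_finite[OF assms(1)])
  then show ?thesis using assms(2) by simp
qed

lemma bernstein_Pi_bernoulli:
  assumes I: "finite I" and q: "\<And>p. p \<in> I \<Longrightarrow> 0 \<le> q p \<and> q p \<le> 1"
    and \<alpha>: "\<And>p. p \<in> I \<Longrightarrow> \<bar>\<alpha> p\<bar> \<le> \<beta>" and \<beta>: "\<beta> > 0" and y: "y > 0"
    and V: "(\<Sum>p\<in>I. (\<alpha> p)\<^sup>2 * q p) \<le> V"
  shows "measure_pmf.prob (Pi_pmf I False (\<lambda>p. bernoulli_pmf (q p)))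
           {w. (\<Sum>p\<in>I. \<alpha> p * (of_bool (w p) - q p)) \<ge> y} \<le> exp (- (y\<^sup>2 / (4 * V + 2 * \<beta> * y)))"
proof -
  let ?M = "Pi_pmf I False (\<lambda>p. bernoulli_pmf (q p))"
  let ?Y = "\<lambda>w. \<Sum>p\<in>I. \<alpha> p * (of_bool (w p) - q p)"
  have "0 \<le> (\<Sum>p\<in>I. (\<alpha> p)\<^sup>2 * q p)" by (intro sum_nonneg) (simp add: q)
  then have V0: "0 \<le> V" using V by linarith
  define d where "d = 2 * V + \<beta> * y"
  have "\<beta> * y > 0" using \<beta> y by simp
  then have d: "d > 0" "\<beta> * y \<le> d" using V0 by (simp_all add: d_def)
  \<comment> \<open>the minimiser of \<open>\<theta>\<^sup>2 V - \<theta> y\<close> up to the factor \<open>1 + \<beta> y / (2 V)\<close>, so that \<open>\<theta> \<beta> \<le> 1\<close>\<close>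
  define \<theta> where "\<theta> = y / d"
  have \<theta>: "\<theta> > 0" "\<theta> * \<beta> \<le> 1"
    using d y by (simp_all add: \<theta>_def pos_divide_le_eq mult.commute)
  have "measure_pmf.prob ?M {w. ?Y w \<ge> y} \<le> measure_pmf.expectation ?M (\<lambda>w. exp (\<theta> * ?Y w)) / exp (\<theta> * y)"
    by (rule chernoff_bound_pmf[OF finite_set_Pi_pmf_bernoulli[OF I] \<theta>(1)])
  also have "\<dots> \<le> exp (\<Sum>p\<in>I. (\<theta> * \<alpha> p)\<^sup>2 * q p) / exp (\<theta> * y)"
  proof (rule divide_right_mono)
    have "\<bar>\<theta> * \<alpha> p\<bar> \<le> 1" if "p \<in> I" for p
    proof -
      have "\<bar>\<theta> * \<alpha> p\<bar> \<le> \<theta> * \<beta>" using \<alpha>[OF that] \<theta>(1) by (simp add: abs_mult)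
      then show ?thesis using \<theta>(2) by linarith
    qed
    from Pi_bernoulli_centered_mgf_le[OF I q this]
    show "measure_pmf.expectation ?M (\<lambda>w. exp (\<theta> * ?Y w)) \<le> exp (\<Sum>p\<in>I. (\<theta> * \<alpha> p)\<^sup>2 * q p)"
      by (simp add: sum_distrib_left mult.assoc)
  qed simp
  also have "\<dots> \<le> exp (\<theta>\<^sup>2 * V - \<theta> * y)"
    using V by (simp add: exp_diff power_mult_distrib sum_distrib_left[symmetric] mult.assoc)
      (intro divide_right_mono; simp add: mult_left_mono)
  also have "\<theta>\<^sup>2 * V - \<theta> * y = \<theta> * (\<theta> * V - y)" by (simp add: power2_eq_square algebra_simps)
  also have "\<dots> \<le> \<theta> * (y / 2 - y)"
  proof -
    have "y * (2 * V) \<le> y * d" using y \<beta> by (intro mult_left_mono) (simp_all add: d_def)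
    then have "\<theta> * V \<le> y / 2" using d by (simp add: \<theta>_def field_simps)
    then show ?thesis using \<theta>(1) by (intro mult_left_mono) simp_all
  qed
  also have "\<dots> = - (y\<^sup>2 / (2 * d))" by (simp add: \<theta>_def power2_eq_square)
  finally show ?thesis by (simp add: d_def mult.assoc)
qed

lemma bernstein_Pi_bernoulli_abs:
  assumes I: "finite I" and q: "\<And>p. p \<in> I \<Longrightarrow> 0 \<le> q p \<and> q p \<le> 1"
    and \<alpha>: "\<And>p. p \<in> I \<Longrightarrow> \<bar>\<alpha> p\<bar> \<le> \<beta>" and \<beta>: "\<beta> > 0" and y: "y > 0"
    and V: "(\<Sum>p\<in>I. (\<alpha> p)\<^sup>2 * q p) \<le> V"
  shows "measure_pmf.prob (Pi_pmf I False (\<lambda>p. bernoulli_pmf (q p)))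
           {w. \<bar>\<Sum>p\<in>I. \<alpha> p * (of_bool (w p) - q p)\<bar> \<ge> y} \<le> 2 * exp (- (y\<^sup>2 / (4 * V + 2 * \<beta> * y)))"
proof -
  let ?M = "Pi_pmf I False (\<lambda>p. bernoulli_pmf (q p))"
  let ?tail = "\<lambda>\<alpha>. {w. (\<Sum>p\<in>I. \<alpha> p * (of_bool (w p) - q p)) \<ge> y}"
  have "measure_pmf.prob ?M {w. \<bar>\<Sum>p\<in>I. \<alpha> p * (of_bool (w p) - q p)\<bar> \<ge> y}
      \<le> measure_pmf.prob ?M (?tail \<alpha> \<union> ?tail (\<lambda>p. - \<alpha> p))"
    by (intro measure_pmf.finite_measure_mono) (auto simp: sum_negf)
  also have "\<dots> \<le> measure_pmf.prob ?M (?tail \<alpha>) + measure_pmf.prob ?M (?tail (\<lambda>p. - \<alpha> p))"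
    by (rule measure_Un_le) auto
  also have "\<dots> \<le> 2 * exp (- (y\<^sup>2 / (4 * V + 2 * \<beta> * y)))"
  proof -
    have "measure_pmf.prob ?M (?tail (\<lambda>p. - \<alpha> p)) \<le> exp (- (y\<^sup>2 / (4 * V + 2 * \<beta> * y)))"
      by (rule bernstein_Pi_bernoulli[OF I q]) (use \<alpha> \<beta> y V in auto)
    then show ?thesis using bernstein_Pi_bernoulli[OF I q \<alpha> \<beta> y V] by simp
  qed
  finally show ?thesis .
qed

lemma abs_diff_le_of_deriv_bound:
  fixes f f' :: "real \<Rightarrow> real"
  assumes "convex S"
    and "\<And>y. y \<in> S \<Longrightarrow> (f has_real_derivative f' y) (at y within S)"
    and "\<And>y. y \<in> S \<Longrightarrow> \<bar>f' y\<bar> \<le> B"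
    and "x \<in> S" "y \<in> S"
  shows "\<bar>f x - f y\<bar> \<le> B * \<bar>x - y\<bar>"
proof -
  have "norm (f x - f y) \<le> B * norm (x - y)"
  proof (rule differentiable_bound[where f'="\<lambda>y h. f' y * h"])
    show "(f has_derivative (\<lambda>h. f' z * h)) (at z within S)" if "z \<in> S" for z
      using assms(2)[OF that] by (simp add: has_field_derivative_def)
    show "onorm (\<lambda>h. f' z * h) \<le> B" if "z \<in> S" for z
      by (rule onorm_le) (use assms(3)[OF that] in \<open>auto simp: abs_mult intro: mult_right_mono\<close>)
  qed (use assms in auto)
  then show ?thesis by simp
qed

lemma affine_segment_in_01:
  fixes u v s :: real
  assumes "u \<in> {0..1}" "v \<in> {0..1}" "s \<in> {0..1}"
  shows "u + s * (v - u) \<in> {0..1}"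
proof -
  have "(1 - s) *\<^sub>R u + s *\<^sub>R v \<in> {0..1::real}"
    using assms by (intro convexD) auto
  then show ?thesis by (simp add: algebra_simps)
qed

lemma DERIV_along_segment_01:
  fixes f f' :: "real \<Rightarrow> real"
  assumes deriv: "\<And>y. y \<in> {0..1} \<Longrightarrow> (f has_real_derivative f' y) (at y within {0..1})"
    and uvs: "u \<in> {0..1}" "v \<in> {0..1}" "s \<in> {0..1}"
  shows "((\<lambda>s. f (u + s * (v - u))) has_real_derivative f' (u + s * (v - u)) * (v - u)) (at s within {0..1})"
proof -
  let ?g = "\<lambda>s::real. u + s * (v - u)"
  have f: "(f has_real_derivative f' (?g s)) (at (?g s) within ?g ` {0..1})"
    using deriv[OF affine_segment_in_01[OF uvs]]
    by (rule has_field_derivative_subset) (use affine_segment_in_01 uvs in auto)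
  have g: "(?g has_real_derivative (v - u)) (at s within {0..1})"
    by (auto intro!: derivative_eq_intros)
  from DERIV_image_chain[OF f g] show ?thesis by (simp add: o_def)
qed

lemma second_difference_bound:
  fixes f f' :: "real \<Rightarrow> real"
  assumes deriv: "\<And>y. y \<in> {0..1} \<Longrightarrow> (f has_real_derivative f' y) (at y within {0..1})"
    and bounded: "\<And>y. y \<in> {0..1} \<Longrightarrow> \<bar>f' y\<bar> \<le> 1"
    and lipschitz: "\<And>x y. x \<in> {0..1} \<Longrightarrow> y \<in> {0..1} \<Longrightarrow> \<bar>f' x - f' y\<bar> \<le> \<bar>x - y\<bar>"
    and in01: "a1 \<in> {0..1}" "b1 \<in> {0..1}" "a0 \<in> {0..1}" "b0 \<in> {0..1}"
  shows "\<bar>(f a1 - f b1) - (f a0 - f b0)\<bar> \<le> 2 * \<bar>(a1 - a0) - (b1 - b0)\<bar> + \<bar>b1 - b0\<bar> * \<bar>a0 - b0\<bar>"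
proof -
  define \<Delta> where "\<Delta> = (a1 - a0) - (b1 - b0)"
  define seg where "seg u v s = u + s * (v - u)" for u v s :: real
  \<comment> \<open>\<open>F\<close> interpolates from \<open>f b1 - f b0\<close> to \<open>f a1 - f a0\<close>; its derivative is
    \<open>f' q \<cdot> \<Delta> + (f' q - f' p)(a0 - b0)\<close>, and \<open>|q - p| \<le> |b1 - b0| + |\<Delta>|\<close>.\<close>
  define F where "F s = f (seg b1 a1 s) - f (seg b0 a0 s)" for s
  define F' where "F' s = f' (seg b1 a1 s) * (a1 - b1) - f' (seg b0 a0 s) * (a0 - b0)" for s
  have dF: "(F has_real_derivative F' s) (at s within {0..1})" if "s \<in> {0..1}" for s
    unfolding F_def F'_def seg_def using in01 that by (intro DERIV_diff DERIV_along_segment_01 deriv)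
  have bF: "\<bar>F' s\<bar> \<le> 2 * \<bar>\<Delta>\<bar> + \<bar>b1 - b0\<bar> * \<bar>a0 - b0\<bar>" if s: "s \<in> {0..1}" for s
  proof -
    let ?q = "seg b1 a1 s" and ?p = "seg b0 a0 s"
    have q01: "?q \<in> {0..1}" and p01: "?p \<in> {0..1}"
      using affine_segment_in_01 in01 s by (simp_all add: seg_def)
    have "\<bar>?q - ?p\<bar> \<le> \<bar>b1 - b0\<bar> + \<bar>\<Delta>\<bar>"
    proof -
      have "\<bar>s * \<Delta>\<bar> \<le> \<bar>\<Delta>\<bar>" using s by (auto simp: abs_mult intro: mult_left_le_one_le)
      moreover have "?q - ?p = (b1 - b0) + s * \<Delta>" by (simp add: seg_def \<Delta>_def algebra_simps)
      ultimately show ?thesis by linarith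
    qed
    then have "\<bar>(f' ?q - f' ?p) * (a0 - b0)\<bar> \<le> (\<bar>b1 - b0\<bar> + \<bar>\<Delta>\<bar>) * \<bar>a0 - b0\<bar>"
      using lipschitz[OF q01 p01] by (auto simp: abs_mult intro: mult_right_mono)
    also have "\<dots> \<le> \<bar>b1 - b0\<bar> * \<bar>a0 - b0\<bar> + \<bar>\<Delta>\<bar>"
      using in01 mult_left_le[of "\<bar>a0 - b0\<bar>" "\<bar>\<Delta>\<bar>"] by (auto simp: algebra_simps)
    finally have "\<bar>(f' ?q - f' ?p) * (a0 - b0)\<bar> \<le> \<bar>b1 - b0\<bar> * \<bar>a0 - b0\<bar> + \<bar>\<Delta>\<bar>" .
    moreover have "\<bar>f' ?q * \<Delta>\<bar> \<le> \<bar>\<Delta>\<bar>"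
      using bounded[OF q01] by (auto simp: abs_mult intro: mult_left_le_one_le)
    moreover have "F' s = f' ?q * \<Delta> + (f' ?q - f' ?p) * (a0 - b0)"
      by (simp add: F'_def \<Delta>_def algebra_simps)
    ultimately show ?thesis by linarith
  qed
  have "\<bar>F 1 - F 0\<bar> \<le> (2 * \<bar>\<Delta>\<bar> + \<bar>b1 - b0\<bar> * \<bar>a0 - b0\<bar>) * \<bar>1 - 0\<bar>"
    by (rule abs_diff_le_of_deriv_bound[OF _ dF bF]) auto
  then show ?thesis by (simp add: F_def seg_def \<Delta>_def)
qed

lemma lipschitz_deriv_of_second_deriv_bound:
  fixes f f' f'' :: "real \<Rightarrow> real"
  assumes "\<forall>y\<in>{0..1}. (f has_real_derivative f' y) (at y within {0..1}) \<and>
                     (f' has_real_derivative f'' y) (at y within {0..1}) \<and>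
                     \<bar>f' y\<bar> \<le> 1 \<and> \<bar>f'' y\<bar> \<le> 1"
    and "x \<in> {0..1}" "y \<in> {0..1}"
  shows "\<bar>f' x - f' y\<bar> \<le> \<bar>x - y\<bar>"
  using abs_diff_le_of_deriv_bound[of "{0..1}" f' f'' 1 x y] assms by auto

definition upper_pairs :: "nat \<Rightarrow> (nat \<times> nat) set" where
  "upper_pairs n = {(i, j). i < j \<and> j < n}"

lemma finite_upper_pairs [simp]: "finite (upper_pairs n)"
  by (rule finite_subset[of _ "{..<n} \<times> {..<n}"]) (auto simp: upper_pairs_def)

lemma card_upper_pairs_le: "2 * card (upper_pairs n) \<le> n\<^sup>2"
proof -
  have disj: "upper_pairs n \<inter> prod.swap ` upper_pairs n = {}" by (auto simp: upper_pairs_def)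
  have "card (upper_pairs n \<union> prod.swap ` upper_pairs n) \<le> card ({..<n} \<times> {..<n})"
    by (intro card_mono) (auto simp: upper_pairs_def)
  moreover have "card (upper_pairs n \<union> prod.swap ` upper_pairs n) = 2 * card (upper_pairs n)"
    using disj by (simp add: card_Un_disjoint card_image)
  ultimately show ?thesis by (simp add: card_cartesian_product power2_eq_square)
qed

lemma real_card_upper_pairs_le: "real (card (upper_pairs n)) \<le> real n ^ 2 / 2"
proof -
  have "real (2 * card (upper_pairs n)) \<le> real (n\<^sup>2)"
    using card_upper_pairs_le by (simp only: of_nat_le_iff)
  then show ?thesis by simp
qed

lemma sum_upper_triangle:
  "(\<Sum>i<n. \<Sum>j<n. if i < j then g i j else 0) = (\<Sum>p\<in>upper_pairs n. g (fst p) (snd p))"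
proof -
  have "(\<Sum>i<n. \<Sum>j<n. if i < j then g i j else 0)
      = (\<Sum>p\<in>{..<n} \<times> {..<n}. if fst p < snd p then g (fst p) (snd p) else 0)"
    by (simp add: sum.cartesian_product case_prod_beta)
  also have "\<dots> = (\<Sum>p\<in>{p \<in> {..<n} \<times> {..<n}. fst p < snd p}. g (fst p) (snd p))"
    by (simp add: sum.inter_filter)
  also have "{p \<in> {..<n} \<times> {..<n}. fst p < snd p} = upper_pairs n"
    by (auto simp: upper_pairs_def)
  finally show ?thesis .
qed

lemma sum_square_zero_diagonal:
  assumes "\<And>i. g i i = 0"
  shows "(\<Sum>i<n. \<Sum>j<n. g i j) = (\<Sum>p\<in>upper_pairs n. g (fst p) (snd p) + g (snd p) (fst p))"
proof -
  have "(\<Sum>i<n. \<Sum>j<n. g i j)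
      = (\<Sum>i<n. \<Sum>j<n. if i < j then g i j else 0) + (\<Sum>i<n. \<Sum>j<n. if j < i then g i j else 0)"
    by (simp add: sum.distrib[symmetric] assms) (intro sum.cong refl, auto simp: assms)
  also have "(\<Sum>i<n. \<Sum>j<n. if j < i then g i j else 0) = (\<Sum>i<n. \<Sum>j<n. if i < j then g j i else 0)"
    by (rule sum.swap)
  finally show ?thesis by (simp add: sum_upper_triangle sum.distrib)
qed

definition edge_prob :: "(nat \<Rightarrow> nat \<Rightarrow> real) \<Rightarrow> (nat \<Rightarrow> nat) \<Rightarrow> nat \<times> nat \<Rightarrow> real" where
  "edge_prob P Z p = P (Z (fst p)) (Z (snd p))"

lemma sbm_pmf_eq_Pi_pmf:
  "sbm_pmf n P Z = Pi_pmf (upper_pairs n) False (\<lambda>p. bernoulli_pmf (edge_prob P Z p))"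
  by (simp add: sbm_pmf_def upper_pairs_def edge_prob_def case_prod_unfold)

text \<open>The coefficient of the indicator of the edge \<open>(i, j)\<close>, \<open>i < j\<close>, in \<open>Otilde n (adj w) e a b\<close>.\<close>
definition pair_weight :: "(nat \<Rightarrow> nat) \<Rightarrow> nat \<Rightarrow> nat \<Rightarrow> nat \<times> nat \<Rightarrow> real" where
  "pair_weight e a b p =
     (if a = b then 2 * of_bool (e (fst p) = a \<and> e (snd p) = a)
      else of_bool (e (fst p) = a \<and> e (snd p) = b) + of_bool (e (fst p) = b \<and> e (snd p) = a))"

lemma pair_weight_bounds: "0 \<le> pair_weight e a b p \<and> pair_weight e a b p \<le> 2"
  unfolding pair_weight_def by (cases "e (fst p) = a"; cases "e (snd p) = a"; simp)

lemma pair_weight_cong: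
  "e (fst p) = e' (fst p) \<Longrightarrow> e (snd p) = e' (snd p) \<Longrightarrow> pair_weight e a b p = pair_weight e' a b p"
  by (simp add: pair_weight_def)

lemma Otilde_adj_eq_sum:
  "Otilde n (adj w) e a b = (\<Sum>p\<in>upper_pairs n. pair_weight e a b p * of_bool (w p))"
proof (cases "a = b")
  case True
  have "Ocount n (adj w) e a b
      = (\<Sum>i<n. \<Sum>j<n. if i < j then of_bool (w (i, j)) * of_bool (e i = a \<and> e j = a) else 0)"
    using True unfolding Ocount_def by (auto simp: adj_def intro!: sum.cong)
  then show ?thesis
    using True by (simp add: Otilde_def pair_weight_def sum_upper_triangle sum_distrib_left mult.commute)
next
  case False
  have "Ocount n (adj w) e a b = (\<Sum>i<n. \<Sum>j<n. adj w i j * of_bool (e i = a \<and> e j = b))"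
    using False by (simp add: Ocount_def)
  also have "\<dots> = (\<Sum>p\<in>upper_pairs n. pair_weight e a b p * of_bool (w p))"
    using False by (subst sum_square_zero_diagonal)
      (auto simp: adj_def pair_weight_def upper_pairs_def intro!: sum.cong)
  finally show ?thesis using False by (simp add: Otilde_def)
qed

lemma expectation_Pi_bernoulli_linear:
  assumes "finite I" "\<And>p. p \<in> I \<Longrightarrow> 0 \<le> q p \<and> q p \<le> 1"
  shows "measure_pmf.expectation (Pi_pmf I False (\<lambda>p. bernoulli_pmf (q p))) (\<lambda>w. \<Sum>p\<in>I. c p * of_bool (w p))
       = (\<Sum>p\<in>I. c p * q p)"
proof -
  let ?M = "Pi_pmf I False (\<lambda>p. bernoulli_pmf (q p))"
  have "measure_pmf.expectation ?M (\<lambda>w. \<Sum>p\<in>I. c p * of_bool (w p))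
      = (\<Sum>p\<in>I. measure_pmf.expectation ?M (\<lambda>w. c p * of_bool (w p)))"
    by (rule Bochner_Integration.integral_sum)
      (auto intro: integrable_measure_pmf_finite[OF finite_set_Pi_pmf_bernoulli[OF assms(1)]])
  also have "\<dots> = (\<Sum>p\<in>I. c p * q p)"
  proof (intro sum.cong refl)
    fix p assume p: "p \<in> I"
    have "measure_pmf.expectation ?M (\<lambda>w. c p * of_bool (w p))
        = measure_pmf.expectation (map_pmf (\<lambda>w. w p) ?M) (\<lambda>b. c p * of_bool b)"
      by simp
    also have "map_pmf (\<lambda>w. w p) ?M = bernoulli_pmf (q p)"
      using p assms(1) by (simp add: Pi_pmf_component)
    finally show "measure_pmf.expectation ?M (\<lambda>w. c p * of_bool (w p)) = c p * q p"
      using assms(2)[OF p] by simp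
  qed
  finally show ?thesis .
qed

definition pair_density :: "nat \<Rightarrow> (nat \<Rightarrow> nat) \<Rightarrow> nat \<Rightarrow> nat \<Rightarrow> (nat \<times> nat \<Rightarrow> real) \<Rightarrow> real" where
  "pair_density n e a b f = (\<Sum>p\<in>upper_pairs n. pair_weight e a b p * f p) / real n ^ 2"

lemma pair_density_in_01:
  assumes "\<And>p. p \<in> upper_pairs n \<Longrightarrow> 0 \<le> f p \<and> f p \<le> 1"
  shows "pair_density n e a b f \<in> {0..1}"
proof -
  have "(\<Sum>p\<in>upper_pairs n. pair_weight e a b p * f p) \<le> (\<Sum>p\<in>upper_pairs n. 2)"
    using assms pair_weight_bounds by (intro sum_mono) (metis mult_mono mult.right_neutral order.trans)
  also have "\<dots> \<le> real n ^ 2"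
    using real_card_upper_pairs_le[of n] by simp
  finally have "(\<Sum>p\<in>upper_pairs n. pair_weight e a b p * f p) \<le> real n ^ 2" .
  moreover have "0 \<le> (\<Sum>p\<in>upper_pairs n. pair_weight e a b p * f p)"
    using assms pair_weight_bounds by (intro sum_nonneg mult_nonneg_nonneg) auto
  ultimately show ?thesis by (cases "n = 0") (simp_all add: pair_density_def divide_le_eq_1)
qed

lemma Xmat_eq_pair_density:
  assumes "\<And>p. p \<in> upper_pairs n \<Longrightarrow> 0 \<le> edge_prob P Z p \<and> edge_prob P Z p \<le> 1"
  shows "Xmat n P Z t w e a b
       = t a b (pair_density n e a b (\<lambda>p. of_bool (w p))) - t a b (pair_density n e a b (edge_prob P Z))"
  using expectation_Pi_bernoulli_linear[OF finite_upper_pairs assms, where c="pair_weight e a b"]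
  by (simp add: Xmat_def pair_density_def Otilde_adj_eq_sum sbm_pmf_eq_Pi_pmf)

definition density_coeff :: "nat \<Rightarrow> (nat \<Rightarrow> nat) \<Rightarrow> nat \<Rightarrow> nat \<Rightarrow> nat \<times> nat \<Rightarrow> real" where
  "density_coeff n e a b p = pair_weight e a b p / real n ^ 2"

lemma pair_density_eq_sum:
  "pair_density n e a b f = (\<Sum>p\<in>upper_pairs n. density_coeff n e a b p * f p)"
  by (simp add: pair_density_def density_coeff_def sum_divide_distrib)

lemma pair_density_diff:
  "pair_density n e a b f - pair_density n e a b g = pair_density n e a b (\<lambda>p. f p - g p)"
  by (simp add: pair_density_def sum_subtractf right_diff_distrib diff_divide_distrib)

lemma abs_density_coeff_le: "\<bar>density_coeff n e a b p\<bar> \<le> 2 / real n ^ 2"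
  using pair_weight_bounds[of e a b p] by (simp add: density_coeff_def divide_right_mono)

lemma abs_density_coeff_diff_le:
  "\<bar>density_coeff n e a b p - density_coeff n e' a b p\<bar> \<le> 2 / real n ^ 2"
  using pair_weight_bounds[of e a b p] pair_weight_bounds[of e' a b p]
  by (simp add: density_coeff_def diff_divide_distrib[symmetric] divide_right_mono abs_le_iff)

lemma density_coeff_diff_eq_0:
  assumes "p \<in> upper_pairs n" "fst p \<notin> {i. i < n \<and> e i \<noteq> e' i}" "snd p \<notin> {i. i < n \<and> e i \<noteq> e' i}"
  shows "density_coeff n e a b p - density_coeff n e' a b p = 0"
  using assms pair_weight_cong[of e p e' a b] by (auto simp: density_coeff_def upper_pairs_def)

lemma Xmat_cong:
  assumes "\<And>i. i < n \<Longrightarrow> e i = e' i"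
  shows "Xmat n P Z t w e a b = Xmat n P Z t w e' a b"
proof -
  have "Otilde n (adj w') e a b = Otilde n (adj w') e' a b" for w'
    unfolding Otilde_adj_eq_sum
    using assms pair_weight_cong[of e _ e'] by (intro sum.cong refl) (auto simp: upper_pairs_def)
  then show ?thesis by (simp add: Xmat_def)
qed

lemma abs_sum_touching_le:
  fixes f :: "nat \<times> nat \<Rightarrow> real"
  assumes S: "S \<subseteq> {..<n}" "card S \<le> m"
    and vanish: "\<And>p. p \<in> upper_pairs n \<Longrightarrow> fst p \<notin> S \<Longrightarrow> snd p \<notin> S \<Longrightarrow> f p = 0"
    and bound: "\<And>p. p \<in> upper_pairs n \<Longrightarrow> \<bar>f p\<bar> \<le> B" and "0 \<le> B"
  shows "\<bar>\<Sum>p\<in>upper_pairs n. f p\<bar> \<le> 2 * real m * real n * B"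
proof -
  define T where "T = {p \<in> upper_pairs n. fst p \<in> S \<or> snd p \<in> S}"
  have "T \<subseteq> S \<times> {..<n} \<union> {..<n} \<times> S" by (auto simp: T_def upper_pairs_def)
  then have "card T \<le> card (S \<times> {..<n} \<union> {..<n} \<times> S)"
    using S by (intro card_mono) (auto intro: finite_subset)
  also have "\<dots> \<le> card (S \<times> {..<n}) + card ({..<n} \<times> S)" by (rule card_Un_le)
  also have "\<dots> = 2 * (card S * n)" by (simp add: card_cartesian_product)
  also have "\<dots> \<le> 2 * m * n" using mult_le_mono1[OF S(2), of n] by simp
  finally have card_T: "real (card T) \<le> 2 * real m * real n" by (metis of_nat_le_iff of_nat_mult of_nat_numeral)
  have "(\<Sum>p\<in>upper_pairs n. f p) = (\<Sum>p\<in>T. f p)"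
    using vanish by (intro sum.mono_neutral_right) (auto simp: T_def)
  then have "\<bar>\<Sum>p\<in>upper_pairs n. f p\<bar> \<le> (\<Sum>p\<in>T. \<bar>f p\<bar>)" by (simp add: sum_abs)
  also have "\<dots> \<le> real (card T) * B" using bound sum_bounded_above[of T "\<lambda>p. \<bar>f p\<bar>" B] by (auto simp: T_def)
  also have "\<dots> \<le> 2 * real m * real n * B" using card_T \<open>0 \<le> B\<close> by (rule mult_right_mono)
  finally show ?thesis .
qed

lemma abs_sum_upper_pairs_le:
  fixes f :: "nat \<times> nat \<Rightarrow> real"
  assumes "\<And>p. p \<in> upper_pairs n \<Longrightarrow> \<bar>f p\<bar> \<le> B" "0 \<le> B"
  shows "\<bar>\<Sum>p\<in>upper_pairs n. f p\<bar> \<le> real n ^ 2 / 2 * B"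
proof -
  have "\<bar>\<Sum>p\<in>upper_pairs n. f p\<bar> \<le> (\<Sum>p\<in>upper_pairs n. \<bar>f p\<bar>)" by (rule sum_abs)
  also have "\<dots> \<le> real (card (upper_pairs n)) * B"
    using assms sum_bounded_above[of "upper_pairs n" "\<lambda>p. \<bar>f p\<bar>" B] by simp
  also have "\<dots> \<le> real n ^ 2 / 2 * B"
    using real_card_upper_pairs_le[of n] assms(2) by (intro mult_right_mono)
  finally show ?thesis .
qed

lemma abs_mult_le_of_bounds:
  fixes f q c s :: real
  assumes "\<bar>f\<bar> \<le> c" "0 \<le> q" "q \<le> s"
  shows "\<bar>f * q\<bar> \<le> c * s" and "\<bar>f\<^sup>2 * q\<bar> \<le> c\<^sup>2 * s"
proof -
  have "\<bar>f\<bar> * q \<le> c * s" using assms by (intro mult_mono) auto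
  then show "\<bar>f * q\<bar> \<le> c * s" using assms by (simp add: abs_mult)
  have "f\<^sup>2 \<le> c\<^sup>2" using assms(1) power_mono[of "\<bar>f\<bar>" c 2] by simp
  then have "f\<^sup>2 * q \<le> c\<^sup>2 * s" using assms by (intro mult_mono) auto
  then show "\<bar>f\<^sup>2 * q\<bar> \<le> c\<^sup>2 * s" using assms by simp
qed

lemma sum_sq_density_coeff_diff_le:
  assumes q: "\<And>p. p \<in> upper_pairs n \<Longrightarrow> 0 \<le> q p \<and> q p \<le> s" and "0 \<le> s"
    and changed: "card {i. i < n \<and> e i \<noteq> e' i} \<le> m"
  shows "(\<Sum>p\<in>upper_pairs n. (density_coeff n e a b p - density_coeff n e' a b p)\<^sup>2 * q p)
       \<le> 8 * (real m * s / real n) / real n ^ 2"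
proof -
  have "\<bar>\<Sum>p\<in>upper_pairs n. (density_coeff n e a b p - density_coeff n e' a b p)\<^sup>2 * q p\<bar>
      \<le> 2 * real m * real n * ((2 / real n ^ 2)\<^sup>2 * s)"
    using changed density_coeff_diff_eq_0 abs_mult_le_of_bounds(2)[OF abs_density_coeff_diff_le] q \<open>0 \<le> s\<close>
    by (intro abs_sum_touching_le[where S="{i. i < n \<and> e i \<noteq> e' i}"]) auto
  also have "\<dots> = 8 * (real m * s / real n) / real n ^ 2"
    by (cases "n = 0") (simp_all add: power2_eq_square power4_eq_xxxx)
  finally show ?thesis by simp
qed

lemma abs_sum_density_coeff_diff_le:
  assumes q: "\<And>p. p \<in> upper_pairs n \<Longrightarrow> 0 \<le> q p \<and> q p \<le> s" and "0 \<le> s"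
    and changed: "card {i. i < n \<and> e i \<noteq> e' i} \<le> m"
  shows "\<bar>\<Sum>p\<in>upper_pairs n. (density_coeff n e a b p - density_coeff n e' a b p) * q p\<bar>
       \<le> 4 * (real m * s / real n)"
proof -
  have "\<bar>\<Sum>p\<in>upper_pairs n. (density_coeff n e a b p - density_coeff n e' a b p) * q p\<bar>
      \<le> 2 * real m * real n * (2 / real n ^ 2 * s)"
    using changed density_coeff_diff_eq_0 abs_mult_le_of_bounds(1)[OF abs_density_coeff_diff_le] q \<open>0 \<le> s\<close>
    by (intro abs_sum_touching_le[where S="{i. i < n \<and> e i \<noteq> e' i}"]) auto
  also have "\<dots> = 4 * (real m * s / real n)"
    by (cases "n = 0") (simp_all add: power2_eq_square)
  finally show ?thesis .
qed

lemma sum_sq_density_coeff_le: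
  assumes q: "\<And>p. p \<in> upper_pairs n \<Longrightarrow> 0 \<le> q p \<and> q p \<le> s" and "0 \<le> s"
  shows "(\<Sum>p\<in>upper_pairs n. (density_coeff n e a b p)\<^sup>2 * q p) \<le> 2 * s / real n ^ 2"
proof -
  have "\<bar>\<Sum>p\<in>upper_pairs n. (density_coeff n e a b p)\<^sup>2 * q p\<bar> \<le> real n ^ 2 / 2 * ((2 / real n ^ 2)\<^sup>2 * s)"
    using abs_mult_le_of_bounds(2)[OF abs_density_coeff_le] q \<open>0 \<le> s\<close>
    by (intro abs_sum_upper_pairs_le) auto
  also have "\<dots> = 2 * s / real n ^ 2"
    by (cases "n = 0") (simp_all add: power2_eq_square)
  finally show ?thesis by simp
qed

lemma Xmat_label_change_le:
  fixes t' :: "real \<Rightarrow> real" and w :: "nat \<times> nat \<Rightarrow> bool" and e :: "nat \<Rightarrow> nat"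
  assumes q: "\<And>p. p \<in> upper_pairs n \<Longrightarrow> 0 \<le> edge_prob P Z p \<and> edge_prob P Z p \<le> 1"
    and deriv: "\<And>y. y \<in> {0..1} \<Longrightarrow> (t a b has_real_derivative t' y) (at y within {0..1})"
    and bounded: "\<And>y. y \<in> {0..1} \<Longrightarrow> \<bar>t' y\<bar> \<le> 1"
    and lipschitz: "\<And>x y. x \<in> {0..1} \<Longrightarrow> y \<in> {0..1} \<Longrightarrow> \<bar>t' x - t' y\<bar> \<le> \<bar>x - y\<bar>"
  defines "\<alpha> \<equiv> \<lambda>p. density_coeff n e a b p - density_coeff n Z a b p"
    and "\<xi> \<equiv> \<lambda>p. of_bool (w p) - edge_prob P Z p"
  shows "\<bar>Xmat n P Z t w e a b - Xmat n P Z t w Z a b\<bar>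
     \<le> 2 * \<bar>\<Sum>p\<in>upper_pairs n. \<alpha> p * \<xi> p\<bar>
       + \<bar>\<Sum>p\<in>upper_pairs n. \<alpha> p * edge_prob P Z p\<bar> * \<bar>\<Sum>p\<in>upper_pairs n. density_coeff n Z a b p * \<xi> p\<bar>"
proof -
  let ?U = "\<lambda>e. pair_density n e a b (\<lambda>p. of_bool (w p))"
  let ?V = "\<lambda>e. pair_density n e a b (edge_prob P Z)"
  have U: "?U e' \<in> {0..1}" and V: "?V e' \<in> {0..1}" for e'
    by (rule pair_density_in_01; use q in simp)+
  have change: "pair_density n e a b f - pair_density n Z a b f = (\<Sum>p\<in>upper_pairs n. \<alpha> p * f p)" for f
    by (simp add: \<alpha>_def pair_density_eq_sum sum_subtractf[symmetric] left_diff_distrib)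
  have "\<bar>Xmat n P Z t w e a b - Xmat n P Z t w Z a b\<bar>
      = \<bar>(t a b (?U e) - t a b (?V e)) - (t a b (?U Z) - t a b (?V Z))\<bar>"
    using q by (simp add: Xmat_eq_pair_density)
  also have "\<dots> \<le> 2 * \<bar>(?U e - ?U Z) - (?V e - ?V Z)\<bar> + \<bar>?V e - ?V Z\<bar> * \<bar>?U Z - ?V Z\<bar>"
    by (rule second_difference_bound[OF deriv bounded lipschitz U V U V])
  also have "(?U e - ?U Z) - (?V e - ?V Z) = (?U e - ?V e) - (?U Z - ?V Z)" by simp
  finally show ?thesis
    by (simp only: pair_density_diff change) (simp add: \<xi>_def pair_density_eq_sum)
qed

lemma deviation_split:
  fixes x X D \<delta> R r :: real
  assumes "x < X" "X \<le> 2 * \<bar>D\<bar> + \<bar>\<delta>\<bar> * \<bar>R\<bar>" "\<bar>\<delta>\<bar> \<le> 4 * r" "0 < x"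
  shows "x / 4 \<le> \<bar>D\<bar> \<or> (0 < r \<and> x / (8 * r) \<le> \<bar>R\<bar>)"
proof (rule ccontr)
  assume "\<not> ?thesis"
  then have D: "\<bar>D\<bar> < x / 4" and R: "0 < r \<Longrightarrow> \<bar>R\<bar> < x / (8 * r)" by auto
  have "\<bar>\<delta>\<bar> * \<bar>R\<bar> \<le> x / 2"
  proof (cases "0 < r")
    case True
    have "\<bar>\<delta>\<bar> * \<bar>R\<bar> \<le> 4 * r * (x / (8 * r))" using assms(3) R[OF True] by (intro mult_mono) auto
    then show ?thesis using True by simp
  next
    case False
    then have "\<bar>\<delta>\<bar> = 0" using assms(3) abs_ge_zero[of \<delta>] by linarith
    then show ?thesis using assms(4) by simp
  qed
  then show False using assms(1,2) D by linarith
qed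

text \<open>With \<open>N = n\<^sup>2\<close> and \<open>r = m s / n\<close>, the exponents that Bernstein's inequality gives for the
  two parts of the label-change deviation both dominate the target exponent.\<close>
lemma bernstein_exponent_deviation_part:
  fixes x N r :: real
  assumes "0 < x" "0 < N" "0 \<le> r"
  shows "1/2048 * x\<^sup>2 * N / (r + x) \<le> (x / 4)\<^sup>2 / (4 * (8 * r / N) + 2 * (2 / N) * (x / 4))"
proof -
  have "1/2048 * x\<^sup>2 * N / (r + x) = x\<^sup>2 * N / (2048 * (r + x))" by simp
  also have "\<dots> \<le> x\<^sup>2 * N / (512 * r + 16 * x)"
    using assms by (intro divide_left_mono) (auto intro: add_nonneg_pos)
  also have "\<dots> = (x / 4)\<^sup>2 / (4 * (8 * r / N) + 2 * (2 / N) * (x / 4))"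
    using assms by (simp add: field_simps power2_eq_square)
  finally show ?thesis .
qed

lemma bernstein_exponent_label_part:
  fixes x N r s :: real
  assumes "0 < x" "0 < N" "0 < r" "r \<le> 1" "0 \<le> s" "s \<le> 1"
  shows "1/2048 * x\<^sup>2 * N / (r + x) \<le> (x / (8 * r))\<^sup>2 / (4 * (2 * s / N) + 2 * (2 / N) * (x / (8 * r)))"
proof -
  have "r * r * s \<le> r" "r * x \<le> x" using assms by (simp_all add: mult_le_one mult_le_cancel_right1)
  then have "512 * (r * r * s) + 32 * (r * x) \<le> 512 * r + 32 * x" by simp
  also have "\<dots> \<le> 2048 * (r + x)" using assms by simp
  finally have "512 * (r * r * s) + 32 * (r * x) \<le> 2048 * (r + x)" .
  moreover have "0 < 512 * (r * r * s) + 32 * (r * x)" using assms by (simp add: add_nonneg_pos)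
  ultimately have "x\<^sup>2 * N / (2048 * (r + x)) \<le> x\<^sup>2 * N / (512 * (r * r * s) + 32 * (r * x))"
    using assms by (intro divide_left_mono) auto
  also have "\<dots> = (x / (8 * r))\<^sup>2 / (4 * (2 * s / N) + 2 * (2 / N) * (x / (8 * r)))"
    using assms by (simp add: field_simps power2_eq_square)
  finally show ?thesis by simp
qed

lemma Xmat_label_change_event_subset:
  fixes s x :: real and t' t'' :: "real \<Rightarrow> real"
  assumes q: "\<And>p. p \<in> upper_pairs n \<Longrightarrow> 0 \<le> edge_prob P Z p \<and> edge_prob P Z p \<le> s"
    and s: "0 \<le> s" "s \<le> 1"
    and changed: "card {i. i < n \<and> e i \<noteq> Z i} \<le> m"
    and t: "\<forall>y\<in>{0..1}. (t a b has_real_derivative t' y) (at y within {0..1}) \<and>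
                     (t' has_real_derivative t'' y) (at y within {0..1}) \<and>
                     \<bar>t' y\<bar> \<le> 1 \<and> \<bar>t'' y\<bar> \<le> 1"
    and x: "0 < x"
  defines "r \<equiv> real m * s / real n"
  shows "{w. x < \<bar>Xmat n P Z t w e a b - Xmat n P Z t w Z a b\<bar>}
    \<subseteq> {w. x / 4 \<le> \<bar>\<Sum>p\<in>upper_pairs n.
                    (density_coeff n e a b p - density_coeff n Z a b p) * (of_bool (w p) - edge_prob P Z p)\<bar>}
      \<union> {w. 0 < r \<and> x / (8 * r) \<le> \<bar>\<Sum>p\<in>upper_pairs n.
                    density_coeff n Z a b p * (of_bool (w p) - edge_prob P Z p)\<bar>}"
proof
  fix w assume "w \<in> {w. x < \<bar>Xmat n P Z t w e a b - Xmat n P Z t w Z a b\<bar>}"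
  then have gt: "x < \<bar>Xmat n P Z t w e a b - Xmat n P Z t w Z a b\<bar>" by simp
  have q01: "\<And>p. p \<in> upper_pairs n \<Longrightarrow> 0 \<le> edge_prob P Z p \<and> edge_prob P Z p \<le> 1"
    using q s by force
  have "\<bar>Xmat n P Z t w e a b - Xmat n P Z t w Z a b\<bar>
      \<le> 2 * \<bar>\<Sum>p\<in>upper_pairs n.
                (density_coeff n e a b p - density_coeff n Z a b p) * (of_bool (w p) - edge_prob P Z p)\<bar>
        + \<bar>\<Sum>p\<in>upper_pairs n. (density_coeff n e a b p - density_coeff n Z a b p) * edge_prob P Z p\<bar>
          * \<bar>\<Sum>p\<in>upper_pairs n. density_coeff n Z a b p * (of_bool (w p) - edge_prob P Z p)\<bar>"
    by (rule Xmat_label_change_le[OF q01]) (use t lipschitz_deriv_of_second_deriv_bound[OF t] in auto)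
  from deviation_split[OF gt this abs_sum_density_coeff_diff_le[OF q s(1) changed] x]
  show "w \<in> {w. x / 4 \<le> \<bar>\<Sum>p\<in>upper_pairs n.
                    (density_coeff n e a b p - density_coeff n Z a b p) * (of_bool (w p) - edge_prob P Z p)\<bar>}
      \<union> {w. 0 < r \<and> x / (8 * r) \<le> \<bar>\<Sum>p\<in>upper_pairs n.
                    density_coeff n Z a b p * (of_bool (w p) - edge_prob P Z p)\<bar>}"
    unfolding r_def by blast
qed

lemma prob_Xmat_label_change_gt:
  fixes s x :: real and t' t'' :: "real \<Rightarrow> real"
  assumes m: "m \<le> n"
    and q: "\<And>p. p \<in> upper_pairs n \<Longrightarrow> 0 \<le> edge_prob P Z p \<and> edge_prob P Z p \<le> s"
    and s: "0 \<le> s" "s \<le> 1"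
    and changed: "card {i. i < n \<and> e i \<noteq> Z i} \<le> m"
    and t: "\<forall>y\<in>{0..1}. (t a b has_real_derivative t' y) (at y within {0..1}) \<and>
                     (t' has_real_derivative t'' y) (at y within {0..1}) \<and>
                     \<bar>t' y\<bar> \<le> 1 \<and> \<bar>t'' y\<bar> \<le> 1"
    and x: "0 < x"
  shows "measure_pmf.prob (sbm_pmf n P Z) {w. \<bar>Xmat n P Z t w e a b - Xmat n P Z t w Z a b\<bar> > x}
     \<le> 4 * exp (- (1/2048 * x\<^sup>2 * real n ^ 2) / (real m * s / real n + x))"
proof (cases "n = 0")
  case True
  then have "{w. \<bar>Xmat n P Z t w e a b - Xmat n P Z t w Z a b\<bar> > x} = {}"
    using x Xmat_cong[of n e Z] by auto
  then show ?thesis by simp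
next
  case False
  define N where "N = real n ^ 2"
  define r where "r = real m * s / real n"
  define E where "E = exp (- (1/2048 * x\<^sup>2 * N) / (r + x))"
  let ?M = "Pi_pmf (upper_pairs n) False (\<lambda>p. bernoulli_pmf (edge_prob P Z p))"
  let ?D = "\<lambda>w. \<Sum>p\<in>upper_pairs n.
              (density_coeff n e a b p - density_coeff n Z a b p) * (of_bool (w p) - edge_prob P Z p)"
  let ?R = "\<lambda>w. \<Sum>p\<in>upper_pairs n. density_coeff n Z a b p * (of_bool (w p) - edge_prob P Z p)"
  have N: "0 < N" using False by (simp add: N_def)
  have "real m * s \<le> real n * 1" using m s by (intro mult_mono) auto
  then have r: "0 \<le> r" "r \<le> 1" using s False by (auto simp: r_def divide_le_eq_1)
  have q01: "\<And>p. p \<in> upper_pairs n \<Longrightarrow> 0 \<le> edge_prob P Z p \<and> edge_prob P Z p \<le> 1"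
    using q s by force
  have exp_le_E: "2 * exp (- y) \<le> 2 * E" if "1/2048 * x\<^sup>2 * N / (r + x) \<le> y" for y
    using that unfolding E_def minus_divide_left[symmetric] by simp
  have "measure_pmf.prob ?M {w. \<bar>Xmat n P Z t w e a b - Xmat n P Z t w Z a b\<bar> > x}
      \<le> measure_pmf.prob ?M {w. x / 4 \<le> \<bar>?D w\<bar>} + measure_pmf.prob ?M {w. 0 < r \<and> x / (8 * r) \<le> \<bar>?R w\<bar>}"
    using Xmat_label_change_event_subset[where t=t and a=a and b=b, OF q s changed t x]
    by (intro order.trans[OF measure_pmf.finite_measure_mono measure_Un_le]) (auto simp: r_def)
  moreover have "measure_pmf.prob ?M {w. x / 4 \<le> \<bar>?D w\<bar>} \<le> 2 * E"
  proof -
    have "measure_pmf.prob ?M {w. x / 4 \<le> \<bar>?D w\<bar>}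
        \<le> 2 * exp (- ((x / 4)\<^sup>2 / (4 * (8 * r / N) + 2 * (2 / N) * (x / 4))))"
      by (rule bernstein_Pi_bernoulli_abs[OF finite_upper_pairs q01 abs_density_coeff_diff_le[of n, folded N_def]])
        (use x N sum_sq_density_coeff_diff_le[OF q s(1) changed] in \<open>simp_all add: N_def r_def\<close>)
    also have "\<dots> \<le> 2 * E" by (rule exp_le_E[OF bernstein_exponent_deviation_part[OF x N r(1)]])
    finally show ?thesis .
  qed
  moreover have "measure_pmf.prob ?M {w. 0 < r \<and> x / (8 * r) \<le> \<bar>?R w\<bar>} \<le> 2 * E"
  proof (cases "0 < r")
    case True
    have "measure_pmf.prob ?M {w. x / (8 * r) \<le> \<bar>?R w\<bar>}
        \<le> 2 * exp (- ((x / (8 * r))\<^sup>2 / (4 * (2 * s / N) + 2 * (2 / N) * (x / (8 * r)))))"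
      by (rule bernstein_Pi_bernoulli_abs[OF finite_upper_pairs q01 abs_density_coeff_le[of n, folded N_def]])
        (use x N True sum_sq_density_coeff_le[OF q s(1)] in \<open>simp_all add: N_def\<close>)
    also have "\<dots> \<le> 2 * E" by (rule exp_le_E[OF bernstein_exponent_label_part[OF x N True r(2) s]])
    finally show ?thesis using True by simp
  qed (simp add: E_def)
  ultimately show ?thesis by (simp add: sbm_pmf_eq_Pi_pmf E_def N_def r_def)
qed

lemma supnorm_image: "{\<bar>M a b\<bar> | a b. a < K \<and> b < K} = (\<lambda>(a, b). \<bar>M a b\<bar>) ` ({..<K} \<times> {..<K})"
  by auto

lemma abs_le_supnorm: "a < K \<Longrightarrow> b < K \<Longrightarrow> \<bar>M a b\<bar> \<le> supnorm K M"
  unfolding supnorm_def supnorm_image by (rule Max_ge) auto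

lemma supnorm_le: "0 < K \<Longrightarrow> (\<And>a b. a < K \<Longrightarrow> b < K \<Longrightarrow> \<bar>M a b\<bar> \<le> c) \<Longrightarrow> supnorm K M \<le> c"
  unfolding supnorm_def supnorm_image by (subst Max_le_iff) auto

lemma supnorm_gtE:
  assumes "0 < K" "x < supnorm K M"
  obtains a b where "a < K" "b < K" "x < \<bar>M a b\<bar>"
proof -
  have "supnorm K M \<in> (\<lambda>(a, b). \<bar>M a b\<bar>) ` ({..<K} \<times> {..<K})"
    unfolding supnorm_def supnorm_image by (rule Max_in) (use assms in auto)
  then show ?thesis using that assms(2) by auto
qed

definition relabel :: "(nat \<Rightarrow> nat) \<Rightarrow> nat set \<Rightarrow> (nat \<Rightarrow> nat) \<Rightarrow> nat \<Rightarrow> nat" where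
  "relabel Z S f i = (if i \<in> S then f i else Z i)"

text \<open>A labelling differing from \<open>Z\<close> in at most \<open>m\<close> nodes is determined on \<open>{..<n}\<close> by a set of
  exactly \<open>m\<close> nodes containing those and by new labels on that set.\<close>
definition relabellings :: "nat \<Rightarrow> nat \<Rightarrow> nat \<Rightarrow> (nat set \<times> (nat \<Rightarrow> nat)) set" where
  "relabellings n m K = (SIGMA S:{S. S \<subseteq> {..<n} \<and> card S = m}. S \<rightarrow>\<^sub>E {..<K})"

lemma relabellings_cover:
  assumes "m \<le> n" "\<forall>i<n. e i < K" "card {i. i < n \<and> e i \<noteq> Z i} \<le> m"
  obtains S f where "(S, f) \<in> relabellings n m K" "\<And>i. i < n \<Longrightarrow> relabel Z S f i = e i"
proof -
  obtain S where S: "{i. i < n \<and> e i \<noteq> Z i} \<subseteq> S" "S \<subseteq> {..<n}" "card S = m"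
    using exists_subset_between[of "{i. i < n \<and> e i \<noteq> Z i}" m "{..<n}"] assms by auto
  show ?thesis
    by (rule that[of S "restrict e S"]) (use S assms in \<open>auto simp: relabellings_def relabel_def\<close>)
qed

lemma card_relabel_changed_le:
  assumes "(S, f) \<in> relabellings n m K"
  shows "card {i. i < n \<and> relabel Z S f i \<noteq> Z i} \<le> m"
proof -
  have "{i. i < n \<and> relabel Z S f i \<noteq> Z i} \<subseteq> S" by (auto simp: relabel_def)
  moreover have "finite S" "card S = m" using assms by (auto simp: relabellings_def intro: finite_subset)
  ultimately show ?thesis by (metis card_mono)
qed

lemma finite_relabellings: "finite (relabellings n m K)"
  unfolding relabellings_def
  by (intro finite_SigmaI finite_PiE) (auto intro: finite_subset[of _ "Pow {..<n}"] finite_subset)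

lemma card_relabellings: "card (relabellings n m K) = (n choose m) * K ^ m"
proof -
  have "card (relabellings n m K) = (\<Sum>S\<in>{S. S \<subseteq> {..<n} \<and> card S = m}. card (S \<rightarrow>\<^sub>E {..<K}))"
    unfolding relabellings_def
    by (intro card_SigmaI) (auto intro!: finite_PiE intro: finite_subset[of _ "Pow {..<n}"] finite_subset)
  also have "\<dots> = (\<Sum>S\<in>{S. S \<subseteq> {..<n} \<and> card S = m}. K ^ m)"
  proof (intro sum.cong refl)
    fix S assume "S \<in> {S. S \<subseteq> {..<n} \<and> card S = m}"
    then have "finite S" "card S = m" by (auto intro: finite_subset)
    then show "card (S \<rightarrow>\<^sub>E {..<K}) = K ^ m" by (simp add: card_PiE)
  qed
  finally show ?thesis using n_subsets[of "{..<n}" m] by simp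
qed

lemma max_label_change_event_subset:
  assumes "0 < K" "m \<le> n"
  shows "{w. \<exists>e. (\<forall>i<n. e i < K) \<and> card {i. i < n \<and> e i \<noteq> Z i} \<le> m \<and>
              supnorm K (\<lambda>a b. Xmat n P Z t w e a b - Xmat n P Z t w Z a b) > x}
    \<subseteq> (\<Union>((S, f), (a, b)) \<in> relabellings n m K \<times> ({..<K} \<times> {..<K}).
          {w. x < \<bar>Xmat n P Z t w (relabel Z S f) a b - Xmat n P Z t w Z a b\<bar>})"
proof safe
  fix w e
  assume e: "\<forall>i<n. e i < K" "card {i. i < n \<and> e i \<noteq> Z i} \<le> m"
    and gt: "x < supnorm K (\<lambda>a b. Xmat n P Z t w e a b - Xmat n P Z t w Z a b)"
  obtain a b where ab: "a < K" "b < K" "x < \<bar>Xmat n P Z t w e a b - Xmat n P Z t w Z a b\<bar>"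
    using supnorm_gtE[OF assms(1) gt] by blast
  obtain S f where Sf: "(S, f) \<in> relabellings n m K" "\<And>i. i < n \<Longrightarrow> relabel Z S f i = e i"
    using relabellings_cover[OF assms(2) e] by blast
  have "Xmat n P Z t w (relabel Z S f) a b = Xmat n P Z t w e a b" by (rule Xmat_cong) (rule Sf(2))
  then show "w \<in> (\<Union>((S, f), (a, b)) \<in> relabellings n m K \<times> ({..<K} \<times> {..<K}).
          {w. x < \<bar>Xmat n P Z t w (relabel Z S f) a b - Xmat n P Z t w Z a b\<bar>})"
    using Sf(1) ab by force
qed

lemma prob_max_label_change_gt:
  fixes t :: "nat \<Rightarrow> nat \<Rightarrow> real \<Rightarrow> real" and x :: real
  assumes K: "0 < K" and P: "\<forall>a<K. \<forall>b<K. P a b = P b a \<and> 0 \<le> P a b \<and> P a b \<le> 1"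
    and Z: "\<forall>i<n. Z i < K"
    and t: "\<forall>a<K. \<forall>b<K. \<exists>t' t''.
        (\<forall>y\<in>{0..1}. (t a b has_real_derivative t' y) (at y within {0..1}) \<and>
                     (t' has_real_derivative t'' y) (at y within {0..1}) \<and>
                     \<bar>t' y\<bar> \<le> 1 \<and> \<bar>t'' y\<bar> \<le> 1)"
    and m: "m \<le> n" and x: "0 < x"
  shows "measure_pmf.prob (sbm_pmf n P Z)
      {w. \<exists>e. (\<forall>i<n. e i < K) \<and> card {i. i < n \<and> e i \<noteq> Z i} \<le> m \<and>
              supnorm K (\<lambda>a b. Xmat n P Z t w e a b - Xmat n P Z t w Z a b) > x}
    \<le> 6 * real (n choose m) * real K ^ (m + 2) *
       exp (- (1/2048 * x\<^sup>2 * real n ^ 2) / (real m * supnorm K P / real n + x))"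
proof -
  define E where "E = exp (- (1/2048 * x\<^sup>2 * real n ^ 2) / (real m * supnorm K P / real n + x))"
  define J where "J = relabellings n m K \<times> ({..<K} \<times> {..<K})"
  have s: "0 \<le> supnorm K P" "supnorm K P \<le> 1"
    using abs_le_supnorm[OF K K, of P] P by (auto intro: order.trans supnorm_le[OF K])
  have q: "0 \<le> edge_prob P Z p \<and> edge_prob P Z p \<le> supnorm K P" if "p \<in> upper_pairs n" for p
    using that Z P abs_le_supnorm[of "Z (fst p)" K "Z (snd p)" P]
    by (auto simp: edge_prob_def upper_pairs_def)
  define A where "A = (\<lambda>((S, f), (a, b)). {w. x < \<bar>Xmat n P Z t w (relabel Z S f) a b - Xmat n P Z t w Z a b\<bar>})"
  have event: "measure_pmf.prob (sbm_pmf n P Z) (A ((S, f), (a, b))) \<le> 4 * E"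
    if j: "((S, f), (a, b)) \<in> J" for S f a b
  proof -
    have Sf: "(S, f) \<in> relabellings n m K" and "a < K" "b < K" using j by (auto simp: J_def)
    then obtain t' t'' where "\<forall>y\<in>{0..1}. (t a b has_real_derivative t' y) (at y within {0..1}) \<and>
        (t' has_real_derivative t'' y) (at y within {0..1}) \<and> \<bar>t' y\<bar> \<le> 1 \<and> \<bar>t'' y\<bar> \<le> 1"
      using t by blast
    from prob_Xmat_label_change_gt[where t=t and a=a and b=b, OF m q s card_relabel_changed_le[OF Sf, of Z] this x]
    show ?thesis by (simp add: A_def E_def)
  qed
  have "measure_pmf.prob (sbm_pmf n P Z)
      {w. \<exists>e. (\<forall>i<n. e i < K) \<and> card {i. i < n \<and> e i \<noteq> Z i} \<le> m \<and>
              supnorm K (\<lambda>a b. Xmat n P Z t w e a b - Xmat n P Z t w Z a b) > x}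
    \<le> measure_pmf.prob (sbm_pmf n P Z) (\<Union>j\<in>J. A j)"
    using max_label_change_event_subset[OF K m]
    by (intro measure_pmf.finite_measure_mono) (simp_all add: A_def J_def)
  also have "\<dots> \<le> (\<Sum>j\<in>J. measure_pmf.prob (sbm_pmf n P Z) (A j))"
    by (rule measure_pmf.finite_measure_subadditive_finite) (auto simp: J_def finite_relabellings)
  also have "\<dots> \<le> (\<Sum>j\<in>J. 4 * E)" by (intro sum_mono) (auto intro: event)
  also have "\<dots> = real (n choose m) * real K ^ (m + 2) * (4 * E)"
    by (simp add: J_def card_relabellings card_cartesian_product power_add power2_eq_square)
  also have "\<dots> \<le> 6 * real (n choose m) * real K ^ (m + 2) * E" by (simp add: E_def)
  finally show ?thesis by (simp add: E_def)
qed

theorem lemmaA10: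
  shows "\<exists>c>0. \<forall>(n::nat) (K::nat) (P::nat \<Rightarrow> nat \<Rightarrow> real) (Z::nat \<Rightarrow> nat)
      (t::nat \<Rightarrow> nat \<Rightarrow> real \<Rightarrow> real) (m::nat) (x::real).
    0 < K \<longrightarrow>
    (\<forall>a<K. \<forall>b<K. P a b = P b a \<and> 0 \<le> P a b \<and> P a b \<le> 1) \<longrightarrow>
    (\<forall>i<n. Z i < K) \<longrightarrow>
    (\<forall>a<K. \<forall>b<K. \<exists>t' t''.
        (\<forall>y\<in>{0..1}. (t a b has_real_derivative t' y) (at y within {0..1}) \<and>
                     (t' has_real_derivative t'' y) (at y within {0..1}) \<and>
                     \<bar>t' y\<bar> \<le> 1 \<and> \<bar>t'' y\<bar> \<le> 1)) \<longrightarrow>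
    m \<le> n \<longrightarrow> 0 < x \<longrightarrow>
    measure_pmf.prob (sbm_pmf n P Z)
      {w. \<exists>e. (\<forall>i<n. e i < K) \<and> card {i. i < n \<and> e i \<noteq> Z i} \<le> m \<and>
              supnorm K (\<lambda>a b. Xmat n P Z t w e a b - Xmat n P Z t w Z a b) > x}
    \<le> 6 * real (n choose m) * real K ^ (m + 2) *
       exp (- (c * x\<^sup>2 * real n ^ 2) / (real m * supnorm K P / real n + x))"
  by (intro exI[of _ "1/2048"] conjI allI impI prob_max_label_change_gt) simp_all

end
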